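(* Let ${\mathbf{w}}\in\mathbb{R}^d$, let $\boldsymbol{\Sigma}_1$ be a $d\times d$ covariance matrix, and let ${\boldsymbol{\mu}}_{\min}\le{\boldsymbol{\mu}}_{\max}$ be vectors in $\mathbb{R}^d$. Consider $$\max_{{\boldsymbol{\mu}}_1}\ \mathbb{E}_{{\mathbf{x}}\sim N({\boldsymbol{\mu}}_1,\boldsymbol{\Sigma}_1)}\big[-\log\big(\sigma({\mathbf{w}}^T{\mathbf{x}})\big)\big]\quad\text{s.t.}\quad {\boldsymbol{\mu}}_{\min}\le{\boldsymbol{\mu}}_1\le{\boldsymbol{\mu}}_{\max}.$$ Then an optimal solution ${\boldsymbol{\mu}}_1^*$ has the form ${\boldsymbol{\mu}}_1^*[i]={\boldsymbol{\mu}}_{\max}[i]$ if ${\mathbf{w}}[i]\le0$ and ${\boldsymbol{\mu}}_1^*[i]={\boldsymbol{\mu}}_{\min}[i]$ if ${\mathbf{w}}[i]>0$, for each $i=1,\dots,d$.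
   Context: $\sigma(t)=1/(1+e^{-t})$ is the logistic sigmoid; ${\mathbf{a}}[i]$ denotes the $i$-th entry of a vector ${\mathbf{a}}$; vector inequalities are entrywise. *)

theory Defs
  imports "HOL-Probability.Probability"
begin

definition sigmoid :: "real \<Rightarrow> real" where
  "sigmoid t = 1 / (1 + exp (- t))"

definition covariance_matrix :: "real^'d^'d \<Rightarrow> bool" where
  "covariance_matrix S \<longleftrightarrow> transpose S = S \<and> (\<forall>v. 0 \<le> v \<bullet> (S *v v))"

definition std_mvnormal :: "(real^'d) measure" where
  "std_mvnormal = density lborel (\<lambda>z. ennreal (\<Prod>i\<in>UNIV. std_normal_density (z $ i)))"

text \<open>Multivariate normal N(mu, S): law of mu + A z with z standard normal and A A^T = S
  (the law does not depend on the choice of A; this also covers degenerate S).\<close>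
definition mvnormal :: "real^'d \<Rightarrow> real^'d^'d \<Rightarrow> (real^'d) measure" where
  "mvnormal mu S = (let A = (SOME A :: real^'d^'d. A ** transpose A = S)
                    in distr std_mvnormal borel (\<lambda>z. mu + A *v z))"

end

theory Submission
  imports Defs
begin

text \<open>Write \<open>N(\<mu>, \<Sigma>)\<close> as the law of \<open>\<mu> + A z\<close> with \<open>z\<close> standard normal. Then
  \<open>w \<bullet> x = w \<bullet> \<mu> + v \<bullet> z\<close> with \<open>v = w v* A\<close>, so the expected loss is \<open>E[\<phi>(w \<bullet> \<mu> + v \<bullet> z)]\<close> for the
  nonincreasing function \<open>\<phi> t = - ln (sigmoid t)\<close>. Hence it is nonincreasing in \<open>w \<bullet> \<mu>\<close>, and the
  box corner \<open>\<mu>\<^sup>*\<close> minimises \<open>w \<bullet> \<mu>\<close> over the box coordinate by coordinate. The integrals are finite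
  because \<open>\<phi>\<close> grows at most linearly and the standard normal has finite first moments.\<close>

lemma borel_measurable_antimono:
  fixes f :: "real \<Rightarrow> real"
  assumes "antimono f"
  shows "f \<in> borel_measurable borel"
proof -
  have "mono (\<lambda>t. - f t)"
    by (rule monoI) (simp add: antimonoD[OF assms])
  then have "(\<lambda>t. - (- f t)) \<in> borel_measurable borel"
    by (intro borel_measurable_uminus borel_measurable_mono)
  then show ?thesis by simp
qed

lemma nn_integral_lborel_vec_prod:
  fixes g :: "'d::finite \<Rightarrow> real \<Rightarrow> real"
  assumes [measurable]: "\<And>i. g i \<in> borel_measurable borel" and nonneg: "\<And>i x. 0 \<le> g i x"
  shows "(\<integral>\<^sup>+z. ennreal (\<Prod>i\<in>UNIV. g i (z $ i)) \<partial>lborel) = (\<Prod>i\<in>UNIV. \<integral>\<^sup>+x. ennreal (g i x) \<partial>lborel)"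
proof -
  define f where "f b x = ennreal (g (THE i. b = axis i (1::real)) x)" for b :: "real^'d" and x
  have Basis_eq: "(Basis :: (real^'d) set) = range (\<lambda>i. axis i 1)"
    by (auto simp: Basis_vec_def)
  have inj: "inj (\<lambda>i::'d. axis i (1::real))"
    by (auto simp: inj_def axis_eq_axis)
  have the_axis: "(THE i. axis j (1::real) = axis i 1) = j" for j :: 'd
    by (auto simp: axis_eq_axis)
  have "(\<integral>\<^sup>+z. (\<Prod>b\<in>Basis. f b (z \<bullet> b)) \<partial>lborel) = (\<Prod>b\<in>Basis. (\<integral>\<^sup>+x. f b x \<partial>lborel))"
    by (rule nn_integral_lborel_prod) (auto simp: f_def Basis_eq the_axis)
  also have "(\<Prod>b\<in>Basis. (\<integral>\<^sup>+x. f b x \<partial>lborel)) = (\<Prod>i\<in>UNIV. \<integral>\<^sup>+x. ennreal (g i x) \<partial>lborel)"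
    unfolding Basis_eq by (subst prod.reindex[OF inj]) (simp add: f_def[abs_def] the_axis)
  also have "(\<lambda>z. (\<Prod>b\<in>Basis. f b (z \<bullet> b))) = (\<lambda>z::real^'d. ennreal (\<Prod>i\<in>UNIV. g i (z $ i)))"
    unfolding Basis_eq
    by (subst prod.reindex[OF inj]) (simp add: f_def the_axis prod_ennreal nonneg cart_eq_inner_axis)
  finally show ?thesis .
qed

interpretation std_mvnormal: prob_space "std_mvnormal :: (real^'d::finite) measure"
proof (rule prob_spaceI)
  have "integral\<^sup>L lborel std_normal_density = 1"
    using integral_std_normal_moment_even[of 0] by simp
  then have std_normal_total: "(\<integral>\<^sup>+x. ennreal (std_normal_density x) \<partial>lborel) = 1"
    using integrable_std_normal_moment[of 0] by (simp add: nn_integral_eq_integral)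
  show "emeasure (std_mvnormal :: (real^'d) measure) (space std_mvnormal) = 1"
    unfolding std_mvnormal_def
    by (simp add: emeasure_density nn_integral_lborel_vec_prod[where g="\<lambda>i. std_normal_density"]
        std_normal_total)
qed

lemma integrable_std_mvnormal_component:
  "integrable (std_mvnormal :: (real^'d::finite) measure) (\<lambda>z. z $ k)"
proof -
  let ?g = "\<lambda>i x. std_normal_density x * \<bar>x\<bar> ^ (if i = k then 1 else 0)"
  have moment_finite: "(\<integral>\<^sup>+x. ennreal (?g i x) \<partial>lborel) < \<infinity>" for i
    using integrable_std_normal_moment_abs[of "if i = k then 1 else 0"]
    by (simp add: integrable_iff_bounded)
  have density_times_abs: "ennreal (\<Prod>i\<in>UNIV. std_normal_density (z $ i)) * ennreal \<bar>z $ k\<bar> =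
      ennreal (\<Prod>i\<in>UNIV. ?g i (z $ i))" for z :: "real^'d"
  proof -
    have "(\<Prod>i\<in>UNIV. ?g i (z $ i)) = (\<Prod>i\<in>UNIV. std_normal_density (z $ i)) *
        (\<Prod>i\<in>UNIV. \<bar>z $ i\<bar> ^ (if i = k then 1 else 0))"
      by (simp add: prod.distrib)
    also have "(\<Prod>i\<in>UNIV. \<bar>z $ i\<bar> ^ (if i = k then 1 else 0)) = \<bar>z $ k\<bar>"
      by (simp add: if_distrib cong: if_cong)
    finally show ?thesis by (simp add: ennreal_mult prod_nonneg)
  qed
  have "(\<integral>\<^sup>+z. ennreal (norm (z $ k)) \<partial>std_mvnormal) =
      (\<integral>\<^sup>+z. ennreal (\<Prod>i\<in>UNIV. ?g i (z $ i)) \<partial>(lborel :: (real^'d) measure))"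
    unfolding std_mvnormal_def by (subst nn_integral_density) (simp_all add: density_times_abs)
  also have "\<dots> = (\<Prod>i\<in>UNIV. \<integral>\<^sup>+x. ennreal (?g i x) \<partial>lborel)"
    by (rule nn_integral_lborel_vec_prod) auto
  also have "\<dots> < \<infinity>"
    using moment_finite by (simp add: less_top[symmetric] ennreal_prod_eq_top)
  finally show ?thesis
    by (subst integrable_iff_bounded) (simp add: std_mvnormal_def)
qed

lemma integrable_std_mvnormal_inner:
  "integrable (std_mvnormal :: (real^'d::finite) measure) (\<lambda>z. v \<bullet> z)"
  unfolding inner_vec_def inner_real_def
  by (intro Bochner_Integration.integrable_sum Bochner_Integration.integrable_mult_right
      integrable_std_mvnormal_component[unfolded real_inner_1_right])

lemma integrable_std_mvnormal_linear_growth: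
  fixes \<phi> :: "real \<Rightarrow> real"
  assumes [measurable]: "\<phi> \<in> borel_measurable borel"
    and growth: "\<And>t. \<bar>\<phi> t\<bar> \<le> a + b * \<bar>t\<bar>"
  shows "integrable (std_mvnormal :: (real^'d::finite) measure) (\<lambda>z. \<phi> (c + v \<bullet> z))"
proof (rule Bochner_Integration.integrable_bound)
  show "integrable std_mvnormal (\<lambda>z. a + b * \<bar>c + v \<bullet> z\<bar>)"
    by (intro Bochner_Integration.integrable_add Bochner_Integration.integrable_mult_right
        Bochner_Integration.integrable_abs integrable_std_mvnormal_inner) auto
  show "AE z in std_mvnormal. norm (\<phi> (c + v \<bullet> z)) \<le> norm (a + b * \<bar>c + v \<bullet> z\<bar>)"
    using growth by (intro AE_I2) (smt (verit) real_norm_def)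
qed (simp add: std_mvnormal_def)

lemma integral_std_mvnormal_shift_antimono:
  fixes \<phi> :: "real \<Rightarrow> real"
  assumes "antimono \<phi>" and "\<And>t. \<bar>\<phi> t\<bar> \<le> a + b * \<bar>t\<bar>" and "c \<le> c'"
  shows "(\<integral>z. \<phi> (c' + v \<bullet> z) \<partial>(std_mvnormal :: (real^'d::finite) measure))
    \<le> (\<integral>z. \<phi> (c + v \<bullet> z) \<partial>std_mvnormal)"
  using borel_measurable_antimono[OF assms(1)] assms(2)
  by (intro integral_mono integrable_std_mvnormal_linear_growth antimonoD[OF assms(1)])
    (simp_all add: assms(3))

definition mvnormal_root :: "real^'d^'d \<Rightarrow> real^'d^'d" where
  "mvnormal_root S = (SOME A. A ** transpose A = S)"

lemma integral_mvnormal_comp_inner: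
  fixes f :: "real \<Rightarrow> real"
  assumes [measurable]: "f \<in> borel_measurable borel"
  shows "(\<integral>x. f (w \<bullet> x) \<partial>mvnormal mu S)
    = (\<integral>z. f (w \<bullet> mu + (w v* mvnormal_root S) \<bullet> z) \<partial>std_mvnormal)"
proof -
  have "(\<lambda>z. mu + mvnormal_root S *v z) \<in> borel_measurable borel"
    by (intro borel_measurable_continuous_onI continuous_intros)
  then have shift_measurable: "(\<lambda>z. mu + mvnormal_root S *v z) \<in> borel_measurable std_mvnormal"
    by (simp add: std_mvnormal_def)
  have "(\<integral>x. f (w \<bullet> x) \<partial>mvnormal mu S) = (\<integral>z. f (w \<bullet> (mu + mvnormal_root S *v z)) \<partial>std_mvnormal)"
    unfolding mvnormal_def mvnormal_root_def[symmetric] Let_def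
    by (rule integral_distr[OF shift_measurable]) measurable
  then show ?thesis
    by (simp add: inner_add_right dot_lmul_matrix)
qed

lemma integral_mvnormal_comp_inner_antimono:
  fixes \<phi> :: "real \<Rightarrow> real"
  assumes "antimono \<phi>" and "\<And>t. \<bar>\<phi> t\<bar> \<le> a + b * \<bar>t\<bar>" and "w \<bullet> mu \<le> w \<bullet> mu'"
  shows "(\<integral>x. \<phi> (w \<bullet> x) \<partial>mvnormal mu' S) \<le> (\<integral>x. \<phi> (w \<bullet> x) \<partial>mvnormal mu S)"
  unfolding integral_mvnormal_comp_inner[OF borel_measurable_antimono[OF assms(1)]]
  using assms by (rule integral_std_mvnormal_shift_antimono)

lemma minus_ln_sigmoid: "- ln (sigmoid t) = ln (1 + exp (- t))"
  by (simp add: sigmoid_def ln_div add_pos_pos)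

lemma antimono_minus_ln_sigmoid: "antimono (\<lambda>t. - ln (sigmoid t))"
  by (rule antimonoI) (simp add: minus_ln_sigmoid add_pos_pos)

lemma abs_minus_ln_sigmoid_le: "\<bar>- ln (sigmoid t)\<bar> \<le> 1 + \<bar>t\<bar>"
proof -
  have "1 \<le> exp \<bar>t\<bar>" and "exp (- t) \<le> exp \<bar>t\<bar>"
    by simp_all
  then have "1 + exp (- t) \<le> 2 * exp \<bar>t\<bar>"
    by linarith
  also have "\<dots> \<le> exp 1 * exp \<bar>t\<bar>"
    using exp_ge_add_one_self[of 1] by (intro mult_right_mono) auto
  also have "\<dots> = exp (1 + \<bar>t\<bar>)"
    by (simp add: exp_add)
  finally have "ln (1 + exp (- t)) \<le> ln (exp (1 + \<bar>t\<bar>))"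
    by (subst ln_le_cancel_iff) (auto simp: add_pos_pos)
  then show ?thesis
    by (simp add: minus_ln_sigmoid add_pos_pos)
qed

lemma inner_le_box_corner:
  fixes w lo hi mu :: "real^'d"
  assumes "\<forall>i. lo $ i \<le> mu $ i \<and> mu $ i \<le> hi $ i"
  shows "w \<bullet> (\<chi> i. if w $ i \<le> 0 then hi $ i else lo $ i) \<le> w \<bullet> mu"
  unfolding inner_vec_def
  by (rule sum_mono) (use assms in \<open>auto intro: mult_left_mono_neg mult_left_mono\<close>)

theorem theorem5:
  fixes w mu_min mu_max :: "real^'d" and Sigma1 :: "real^'d^'d"
  assumes "covariance_matrix Sigma1"
    and "\<forall>i. mu_min $ i \<le> mu_max $ i"
  defines "mu_star \<equiv> (\<chi> i. if w $ i \<le> 0 then mu_max $ i else mu_min $ i)"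
  shows "(\<forall>i. mu_min $ i \<le> mu_star $ i \<and> mu_star $ i \<le> mu_max $ i) \<and>
         (\<forall>mu1. (\<forall>i. mu_min $ i \<le> mu1 $ i \<and> mu1 $ i \<le> mu_max $ i) \<longrightarrow>
            (\<integral>x. - ln (sigmoid (w \<bullet> x)) \<partial>mvnormal mu1 Sigma1)
              \<le> (\<integral>x. - ln (sigmoid (w \<bullet> x)) \<partial>mvnormal mu_star Sigma1))"
proof (intro conjI allI impI)
  fix i
  show "mu_min $ i \<le> mu_star $ i" "mu_star $ i \<le> mu_max $ i"
    using assms(2) by (auto simp: mu_star_def)
next
  fix mu1 :: "real^'d"
  assume "\<forall>i. mu_min $ i \<le> mu1 $ i \<and> mu1 $ i \<le> mu_max $ i"
  then have "w \<bullet> mu_star \<le> w \<bullet> mu1"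
    unfolding mu_star_def by (rule inner_le_box_corner)
  then show "(\<integral>x. - ln (sigmoid (w \<bullet> x)) \<partial>mvnormal mu1 Sigma1)
      \<le> (\<integral>x. - ln (sigmoid (w \<bullet> x)) \<partial>mvnormal mu_star Sigma1)"
    using abs_minus_ln_sigmoid_le
    by (intro integral_mvnormal_comp_inner_antimono[where a = 1 and b = 1] antimono_minus_ln_sigmoid)
      simp_all
qed

end
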